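(* Let $M$ be a centrally endo-AIP, semi-projective, retractable right $R$-module with finite uniform dimension. Then $S=\mathrm{End}_R(M)$ is a quasi-Baer ring.
   Context: For $N\le M$, $l_S(N)=\{\phi\in S:\phi(N)=0\}$. An ideal $I$ of $S$ is centrally s-unital if for every $a\in I$ there is $z\in I$ central in $S$ with $az=a$. $M$ is centrally endo-AIP if $l_S(N)$ is a centrally s-unital ideal of $S$ for every fully invariant submodule $N$ of $M$. $M$ is semi-projective if $T=\mathrm{Hom}_R(M,TM)$ for every cyclic right ideal $T$ of $S$. $M$ is retractable if $\mathrm{Hom}_R(M,N)\neq 0$ for every nonzero submodule $N$ of $M$. $M$ has finite uniform dimension if it has an essential submodule that is a finite direct sum of uniform submodules. A ring is quasi-Baer if the right annihilator of every ideal is generated, as a right ideal, by an idempotent. *)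

theory Defs
  imports Main
begin

text \<open>A right R-module structure on the abelian group 'm (the whole type), with
  scalar action sm :: 'm => 'r => 'm, R a (not necessarily commutative) unital ring.\<close>

definition right_module :: "('m::ab_group_add \<Rightarrow> 'r::ring_1 \<Rightarrow> 'm) \<Rightarrow> bool" where
  "right_module sm \<longleftrightarrow>
     (\<forall>x y r. sm (x + y) r = sm x r + sm y r) \<and>
     (\<forall>x r s. sm x (r + s) = sm x r + sm x s) \<and>
     (\<forall>x r s. sm x (r * s) = sm (sm x r) s) \<and>
     (\<forall>x. sm x 1 = x)"

definition submodule :: "('m::ab_group_add \<Rightarrow> 'r::ring_1 \<Rightarrow> 'm) \<Rightarrow> 'm set \<Rightarrow> bool" where
  "submodule sm N \<longleftrightarrow> 0 \<in> N \<and> (\<forall>x\<in>N. \<forall>y\<in>N. x + y \<in> N) \<and> (\<forall>x\<in>N. - x \<in> N)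
     \<and> (\<forall>x\<in>N. \<forall>r. sm x r \<in> N)"

definition gen_submodule :: "('m::ab_group_add \<Rightarrow> 'r::ring_1 \<Rightarrow> 'm) \<Rightarrow> 'm set \<Rightarrow> 'm set" where
  "gen_submodule sm A = \<Inter>{N. submodule sm N \<and> A \<subseteq> N}"

text \<open>S = End_R(M): additive R-linear maps M -> M; ring operations: pointwise
  addition, composition as multiplication (phi psi = phi o psi), identity as 1.\<close>
definition End :: "('m::ab_group_add \<Rightarrow> 'r::ring_1 \<Rightarrow> 'm) \<Rightarrow> ('m \<Rightarrow> 'm) set" where
  "End sm = {f. (\<forall>x y. f (x + y) = f x + f y) \<and> (\<forall>x r. f (sm x r) = sm (f x) r)}"

definition central_in :: "('m \<Rightarrow> 'm) set \<Rightarrow> ('m \<Rightarrow> 'm) \<Rightarrow> bool" where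
  "central_in S z \<longleftrightarrow> z \<in> S \<and> (\<forall>f\<in>S. f \<circ> z = z \<circ> f)"

definition ring_ideal :: "('m::ab_group_add \<Rightarrow> 'm) set \<Rightarrow> ('m \<Rightarrow> 'm) set \<Rightarrow> bool" where
  "ring_ideal S I \<longleftrightarrow> I \<subseteq> S \<and> (\<lambda>_. 0) \<in> I \<and> (\<forall>f\<in>I. \<forall>g\<in>I. (\<lambda>x. f x + g x) \<in> I)
     \<and> (\<forall>f\<in>I. (\<lambda>x. - f x) \<in> I) \<and> (\<forall>f\<in>I. \<forall>s\<in>S. s \<circ> f \<in> I \<and> f \<circ> s \<in> I)"

definition l_ann :: "('m::ab_group_add \<Rightarrow> 'r::ring_1 \<Rightarrow> 'm) \<Rightarrow> 'm set \<Rightarrow> ('m \<Rightarrow> 'm) set" where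
  "l_ann sm N = {f \<in> End sm. \<forall>x\<in>N. f x = 0}"

definition fully_invariant :: "('m::ab_group_add \<Rightarrow> 'r::ring_1 \<Rightarrow> 'm) \<Rightarrow> 'm set \<Rightarrow> bool" where
  "fully_invariant sm N \<longleftrightarrow> submodule sm N \<and> (\<forall>f\<in>End sm. f ` N \<subseteq> N)"

definition centrally_s_unital :: "('m \<Rightarrow> 'm) set \<Rightarrow> ('m \<Rightarrow> 'm) set \<Rightarrow> bool" where
  "centrally_s_unital S I \<longleftrightarrow> (\<forall>a\<in>I. \<exists>z\<in>I. central_in S z \<and> a \<circ> z = a)"

definition centrally_endo_AIP :: "('m::ab_group_add \<Rightarrow> 'r::ring_1 \<Rightarrow> 'm) \<Rightarrow> bool" where
  "centrally_endo_AIP sm \<longleftrightarrow>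
     (\<forall>N. fully_invariant sm N \<longrightarrow>
        ring_ideal (End sm) (l_ann sm N) \<and> centrally_s_unital (End sm) (l_ann sm N))"

definition TM :: "('m::ab_group_add \<Rightarrow> 'r::ring_1 \<Rightarrow> 'm) \<Rightarrow> ('m \<Rightarrow> 'm) set \<Rightarrow> 'm set" where
  "TM sm T = gen_submodule sm (\<Union>t\<in>T. range t)"

text \<open>Hom_R(M, N) viewed inside S.\<close>
definition Hom_into :: "('m::ab_group_add \<Rightarrow> 'r::ring_1 \<Rightarrow> 'm) \<Rightarrow> 'm set \<Rightarrow> ('m \<Rightarrow> 'm) set" where
  "Hom_into sm N = {f \<in> End sm. range f \<subseteq> N}"

definition semi_projective :: "('m::ab_group_add \<Rightarrow> 'r::ring_1 \<Rightarrow> 'm) \<Rightarrow> bool" where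
  "semi_projective sm \<longleftrightarrow>
     (\<forall>\<phi>\<in>End sm. let T = {\<phi> \<circ> s | s. s \<in> End sm} in T = Hom_into sm (TM sm T))"

definition retractable :: "('m::ab_group_add \<Rightarrow> 'r::ring_1 \<Rightarrow> 'm) \<Rightarrow> bool" where
  "retractable sm \<longleftrightarrow>
     (\<forall>N. submodule sm N \<and> N \<noteq> {0} \<longrightarrow> (\<exists>f\<in>Hom_into sm N. f \<noteq> (\<lambda>_. 0)))"

definition essential :: "('m::ab_group_add \<Rightarrow> 'r::ring_1 \<Rightarrow> 'm) \<Rightarrow> 'm set \<Rightarrow> 'm set \<Rightarrow> bool" where
  "essential sm E A \<longleftrightarrow> submodule sm E \<and> E \<subseteq> A \<and>
     (\<forall>N. submodule sm N \<and> N \<subseteq> A \<and> N \<noteq> {0} \<longrightarrow> N \<inter> E \<noteq> {0})"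

definition uniform :: "('m::ab_group_add \<Rightarrow> 'r::ring_1 \<Rightarrow> 'm) \<Rightarrow> 'm set \<Rightarrow> bool" where
  "uniform sm U \<longleftrightarrow> submodule sm U \<and> U \<noteq> {0} \<and>
     (\<forall>A B. submodule sm A \<and> submodule sm B \<and> A \<subseteq> U \<and> B \<subseteq> U \<and> A \<noteq> {0} \<and> B \<noteq> {0}
        \<longrightarrow> A \<inter> B \<noteq> {0})"

definition finite_direct_sum_of_uniform ::
  "('m::ab_group_add \<Rightarrow> 'r::ring_1 \<Rightarrow> 'm) \<Rightarrow> 'm set \<Rightarrow> bool" where
  "finite_direct_sum_of_uniform sm E \<longleftrightarrow>
     (\<exists>n::nat. \<exists>U::nat \<Rightarrow> 'm set. (\<forall>i<n. uniform sm (U i)) \<and>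
        E = {\<Sum>i<n. x i | x. \<forall>i<n. x i \<in> U i} \<and>
        (\<forall>x. (\<forall>i<n. x i \<in> U i) \<and> (\<Sum>i<n. x i) = 0 \<longrightarrow> (\<forall>i<n. x i = 0)))"

definition finite_uniform_dimension :: "('m::ab_group_add \<Rightarrow> 'r::ring_1 \<Rightarrow> 'm) \<Rightarrow> bool" where
  "finite_uniform_dimension sm \<longleftrightarrow>
     (\<exists>E. essential sm E UNIV \<and> finite_direct_sum_of_uniform sm E)"

definition r_ann :: "('m \<Rightarrow> 'm) set \<Rightarrow> ('m \<Rightarrow> 'm) set \<Rightarrow> ('m::zero \<Rightarrow> 'm) set" where
  "r_ann S I = {f \<in> S. \<forall>g\<in>I. g \<circ> f = (\<lambda>_. 0)}"

definition quasi_Baer_End :: "('m::ab_group_add \<Rightarrow> 'r::ring_1 \<Rightarrow> 'm) \<Rightarrow> bool" where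
  "quasi_Baer_End sm \<longleftrightarrow>
     (\<forall>I. ring_ideal (End sm) I \<longrightarrow>
        (\<exists>e\<in>End sm. e \<circ> e = e \<and> r_ann (End sm) I = {e \<circ> s | s. s \<in> End sm}))"

end

theory Submission
  imports Defs HOL.Modules
begin

text \<open>
  First, \<open>S = End(M)\<close> is semiprime: if \<open>aSa = 0\<close>, the AIP condition for the fully invariant
  submodule \<open>SaM\<close> yields a central \<open>z \<in> l_S(SaM)\<close> with \<open>az = a\<close>, and then \<open>a = za = 0\<close>.
  In a semiprime ring the left and right annihilators of an ideal \<open>I\<close> coincide, so
  \<open>r_S(I) = l_S(IM)\<close> is a centrally s-unital ideal \<open>L\<close>, and it suffices to find a right unit
  \<open>e\<close> of \<open>L\<close>: it is then a central idempotent with \<open>L = eS\<close>.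
  If \<open>L\<close> had no right unit, combining local units would produce arbitrarily long families of
  pairwise orthogonal nonzero central elements. But if \<open>M\<close> is retractable with an essential
  direct sum \<open>U\<^sub>1 \<oplus> \<dots> \<oplus> U\<^sub>n\<close> of uniform submodules, every nonzero central \<open>u\<close> is injective on
  some \<open>U\<^sub>l\<close> (otherwise \<open>ker u\<close> is essential and meets \<open>u(M)\<close>, which semiprimeness forbids),
  and two orthogonal central elements are never injective on the same \<open>U\<^sub>l\<close>; so such a family
  has at most \<open>n\<close> members.
\<close>

lemma End_additive: "f \<in> End sm \<Longrightarrow> additive f"
  by (simp add: additive_def End_def)

lemma End_sm: "f \<in> End sm \<Longrightarrow> f (sm x r) = sm (f x) r"
  by (simp add: End_def)

lemma End_add: "f \<in> End sm \<Longrightarrow> f (x + y) = f x + f y"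
  by (simp add: End_def)

lemma End_zero: "f \<in> End sm \<Longrightarrow> f 0 = 0"
  by (rule additive.zero[OF End_additive])

lemma End_uminus: "f \<in> End sm \<Longrightarrow> f (- x) = - f x"
  by (rule additive.minus[OF End_additive])

lemma End_diff: "f \<in> End sm \<Longrightarrow> f (x - y) = f x - f y"
  by (rule additive.diff[OF End_additive])

lemma End_comp: "f \<in> End sm \<Longrightarrow> g \<in> End sm \<Longrightarrow> f \<circ> g \<in> End sm"
  by (simp add: End_def)

lemma id_in_End: "id \<in> End sm"
  by (simp add: End_def)

lemma central_in_End: "central_in S z \<Longrightarrow> z \<in> S"
  by (simp add: central_in_def)

lemma central_commute: "central_in S z \<Longrightarrow> f \<in> S \<Longrightarrow> f (z x) = z (f x)"
  unfolding central_in_def by (metis comp_apply)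

lemma submodule_Int: "submodule sm A \<Longrightarrow> submodule sm B \<Longrightarrow> submodule sm (A \<inter> B)"
  unfolding submodule_def by auto

lemma submodule_sum: "submodule sm K \<Longrightarrow> (\<And>i. i \<in> A \<Longrightarrow> c i \<in> K) \<Longrightarrow> sum c A \<in> K"
  by (induction A rule: infinite_finite_induct) (auto simp: submodule_def)

lemma submodule_gen_submodule: "submodule sm (gen_submodule sm A)"
  unfolding gen_submodule_def submodule_def by auto

lemma gen_submodule_subset: "A \<subseteq> gen_submodule sm A"
  unfolding gen_submodule_def by auto

lemma gen_submodule_least: "submodule sm P \<Longrightarrow> A \<subseteq> P \<Longrightarrow> gen_submodule sm A \<subseteq> P"
  unfolding gen_submodule_def by auto

lemma ring_ideal_subset: "ring_ideal S I \<Longrightarrow> I \<subseteq> S"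
  and ring_ideal_zero: "ring_ideal S I \<Longrightarrow> (\<lambda>_. 0) \<in> I"
  and ring_ideal_left: "ring_ideal S I \<Longrightarrow> f \<in> I \<Longrightarrow> s \<in> S \<Longrightarrow> s \<circ> f \<in> I"
  and ring_ideal_right: "ring_ideal S I \<Longrightarrow> f \<in> I \<Longrightarrow> s \<in> S \<Longrightarrow> f \<circ> s \<in> I"
  unfolding ring_ideal_def by blast+

lemma ring_ideal_add: "ring_ideal S I \<Longrightarrow> f \<in> I \<Longrightarrow> g \<in> I \<Longrightarrow> (\<lambda>x. f x + g x) \<in> I"
  and ring_ideal_uminus: "ring_ideal S I \<Longrightarrow> f \<in> I \<Longrightarrow> (\<lambda>x. - f x) \<in> I"
  unfolding ring_ideal_def by simp_all

lemma ring_ideal_diff: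
  assumes "ring_ideal S I" "f \<in> I" "g \<in> I"
  shows "(\<lambda>x. f x - g x) \<in> I"
  using ring_ideal_add[OF assms(1,2) ring_ideal_uminus[OF assms(1,3)]] by simp

definition semiprime_End :: "('m::ab_group_add \<Rightarrow> 'r::ring_1 \<Rightarrow> 'm) \<Rightarrow> bool" where
  "semiprime_End sm \<longleftrightarrow>
     (\<forall>a\<in>End sm. (\<forall>s\<in>End sm. a \<circ> s \<circ> a = (\<lambda>_. 0)) \<longrightarrow> a = (\<lambda>_. 0))"

lemma semiprime_comp_eq_zero:
  assumes semiprime: "semiprime_End sm" and a: "a \<in> End sm" and b: "b \<in> End sm"
    and bSa: "\<And>s. s \<in> End sm \<Longrightarrow> b \<circ> s \<circ> a = (\<lambda>_. 0)"
  shows "a \<circ> b = (\<lambda>_. 0)"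
proof -
  have "a \<circ> b \<circ> s \<circ> (a \<circ> b) = (\<lambda>_. 0)" if "s \<in> End sm" for s
    using bSa[OF that] End_zero[OF a] by (simp add: fun_eq_iff)
  then show ?thesis
    using semiprime End_comp[OF a b] unfolding semiprime_End_def by blast
qed

lemma centrally_s_unital_right_unit:
  assumes L: "ring_ideal S L" "centrally_s_unital S L" and e: "e \<in> L" "\<forall>a\<in>L. a \<circ> e = a"
  shows "central_in S e" "e \<circ> e = e" "L = {e \<circ> s | s. s \<in> S}"
proof -
  obtain z where z: "z \<in> L" "central_in S z" "e \<circ> z = e"
    using L(2) e(1) unfolding centrally_s_unital_def by blast
  have "e = z"
    using z e ring_ideal_subset[OF L(1)] unfolding central_in_def by (metis subsetD)
  then show central: "central_in S e"
    using z(2) by simp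
  show "e \<circ> e = e"
    using e by blast
  show "L = {e \<circ> s | s. s \<in> S}"
  proof
    show "L \<subseteq> {e \<circ> s | s. s \<in> S}"
    proof
      fix a assume a: "a \<in> L"
      then have aS: "a \<in> S"
        using ring_ideal_subset[OF L(1)] by blast
      have "a = a \<circ> e"
        using e(2) a by simp
      also have "\<dots> = e \<circ> a"
        using central aS unfolding central_in_def by blast
      finally show "a \<in> {e \<circ> s | s. s \<in> S}"
        using aS by blast
    qed
    show "{e \<circ> s | s. s \<in> S} \<subseteq> L"
      using ring_ideal_right[OF L(1) e(1)] by blast
  qed
qed

locale rmodule =
  fixes sm :: "'m::ab_group_add \<Rightarrow> 'r::ring_1 \<Rightarrow> 'm"
  assumes right_module: "right_module sm"
begin

abbreviation S :: "('m \<Rightarrow> 'm) set" where "S \<equiv> End sm"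

lemma sm_additive_left: "additive (\<lambda>x. sm x r)"
  using right_module by (simp add: additive_def right_module_def)

lemma sm_additive_right: "additive (sm x)"
  using right_module by (simp add: additive_def right_module_def)

lemma sm_mult: "sm (sm x r) s = sm x (r * s)"
  using right_module by (simp add: right_module_def)

lemma sm_one: "sm x 1 = x"
  using right_module by (simp add: right_module_def)

lemma sm_sum: "sm (sum c A) r = (\<Sum>i\<in>A. sm (c i) r)"
  by (rule additive.sum[OF sm_additive_left])

lemma End_pointwise_diff: "f \<in> S \<Longrightarrow> g \<in> S \<Longrightarrow> (\<lambda>x. f x - g x) \<in> S"
  unfolding End_def by (auto simp: additive.diff[OF sm_additive_left] algebra_simps)

lemma central_diff:
  assumes a: "central_in S a" and b: "central_in S b"
  shows "central_in S (\<lambda>x. a x - b x)"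
  unfolding central_in_def
proof (intro conjI ballI ext)
  show "(\<lambda>x. a x - b x) \<in> S"
    using End_pointwise_diff[OF central_in_End[OF a] central_in_End[OF b]] .
  show "(f \<circ> (\<lambda>x. a x - b x)) x = ((\<lambda>x. a x - b x) \<circ> f) x" if f: "f \<in> S" for f x
    using central_commute[OF a f] central_commute[OF b f] by (simp add: End_diff[OF f])
qed

lemma submodule_preimage:
  assumes f: "f \<in> S" and P: "submodule sm P"
  shows "submodule sm {x. f x \<in> P}"
  using P by (simp add: submodule_def End_zero[OF f] End_add[OF f] End_uminus[OF f] End_sm[OF f])

lemma submodule_kernel: "f \<in> S \<Longrightarrow> submodule sm {x. f x = 0}"
  using submodule_preimage[of f "{0}"] additive.zero[OF sm_additive_left] by (simp add: submodule_def)

lemma submodule_range: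
  assumes f: "f \<in> S"
  shows "submodule sm (range f)"
  unfolding submodule_def
proof (intro conjI ballI allI)
  show "0 \<in> range f"
    using End_zero[OF f] by (metis rangeI)
  show "x + y \<in> range f" if "x \<in> range f" "y \<in> range f" for x y
    using that by (auto simp flip: End_add[OF f])
  show "- x \<in> range f" if "x \<in> range f" for x
    using that by (auto simp flip: End_uminus[OF f])
  show "sm x r \<in> range f" if "x \<in> range f" for x r
    using that by (auto simp flip: End_sm[OF f])
qed

lemma submodule_cyclic: "submodule sm {sm y r | r. True}"
  unfolding submodule_def
proof (intro conjI ballI allI)
  show "0 \<in> {sm y r | r. True}"
    using additive.zero[OF sm_additive_right] by (metis (mono_tags, lifting) mem_Collect_eq)
  show "a + b \<in> {sm y r | r. True}" if "a \<in> {sm y r | r. True}" "b \<in> {sm y r | r. True}" for a b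
    using that additive.add[OF sm_additive_right, of y, symmetric] by blast
  show "- a \<in> {sm y r | r. True}" if "a \<in> {sm y r | r. True}" for a
    using that additive.minus[OF sm_additive_right, of y, symmetric] by blast
  show "sm a s \<in> {sm y r | r. True}" if "a \<in> {sm y r | r. True}" for a s
    using that sm_mult by blast
qed

section \<open>Semiprimeness and annihilators\<close>

lemma fully_invariant_TM:
  assumes "\<And>f t. f \<in> S \<Longrightarrow> t \<in> T \<Longrightarrow> f \<circ> t \<in> T"
  shows "fully_invariant sm (TM sm T)"
  unfolding fully_invariant_def
proof (intro conjI ballI)
  show "submodule sm (TM sm T)"
    unfolding TM_def by (rule submodule_gen_submodule)
  fix f assume f: "f \<in> S"
  have gen: "(\<Union>t\<in>T. range t) \<subseteq> TM sm T"
    unfolding TM_def by (rule gen_submodule_subset)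
  have "(\<Union>t\<in>T. range t) \<subseteq> {x. f x \<in> TM sm T}"
  proof
    fix y assume "y \<in> (\<Union>t\<in>T. range t)"
    then obtain t x where "t \<in> T" "y = t x"
      by blast
    then have "f y \<in> range (f \<circ> t)" "f \<circ> t \<in> T"
      using assms[OF f] by auto
    then show "y \<in> {x. f x \<in> TM sm T}"
      using gen by blast
  qed
  then have "TM sm T \<subseteq> {x. f x \<in> TM sm T}"
    unfolding TM_def by (rule gen_submodule_least[OF submodule_preimage[OF f submodule_gen_submodule]])
  then show "f ` TM sm T \<subseteq> TM sm T"
    by blast
qed

lemma l_ann_TM: "l_ann sm (TM sm T) = {f \<in> S. \<forall>t\<in>T. f \<circ> t = (\<lambda>_. 0)}"
proof -
  have gen: "(\<Union>t\<in>T. range t) \<subseteq> TM sm T"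
    unfolding TM_def by (rule gen_submodule_subset)
  have "(\<forall>x\<in>TM sm T. f x = 0) \<longleftrightarrow> (\<forall>t\<in>T. f \<circ> t = (\<lambda>_. 0))" if f: "f \<in> S" for f
  proof
    assume "\<forall>x\<in>TM sm T. f x = 0"
    then show "\<forall>t\<in>T. f \<circ> t = (\<lambda>_. 0)"
      using gen by (fastforce simp: fun_eq_iff)
  next
    assume "\<forall>t\<in>T. f \<circ> t = (\<lambda>_. 0)"
    then have "(\<Union>t\<in>T. range t) \<subseteq> {x. f x = 0}"
      by (auto simp: fun_eq_iff)
    then have "TM sm T \<subseteq> {x. f x = 0}"
      unfolding TM_def by (rule gen_submodule_least[OF submodule_kernel[OF f]])
    then show "\<forall>x\<in>TM sm T. f x = 0"
      by blast
  qed
  then show ?thesis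
    unfolding l_ann_def by auto
qed

lemma semiprime_if_centrally_endo_AIP:
  assumes "centrally_endo_AIP sm"
  shows "semiprime_End sm"
  unfolding semiprime_End_def
proof (intro ballI impI)
  fix a assume a: "a \<in> S" and aSa: "\<forall>s\<in>S. a \<circ> s \<circ> a = (\<lambda>_. 0)"
  define T where "T = {s \<circ> a | s. s \<in> S}"
  have "fully_invariant sm (TM sm T)"
  proof (rule fully_invariant_TM)
    fix f t assume f: "f \<in> S" and "t \<in> T"
    then obtain s where s: "s \<in> S" "f \<circ> t = (f \<circ> s) \<circ> a"
      unfolding T_def by (auto simp: comp_assoc)
    then show "f \<circ> t \<in> T"
      using End_comp[OF f s(1)] unfolding T_def by blast
  qed
  then have "centrally_s_unital S (l_ann sm (TM sm T))"
    using assms unfolding centrally_endo_AIP_def by blast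
  moreover have "a \<in> l_ann sm (TM sm T)"
    using a aSa by (auto simp: l_ann_TM T_def comp_assoc)
  ultimately obtain z where z: "z \<in> l_ann sm (TM sm T)" "central_in S z" "a \<circ> z = a"
    unfolding centrally_s_unital_def by blast
  have "id \<circ> a \<in> T"
    unfolding T_def using id_in_End by blast
  then have "z \<circ> a = (\<lambda>_. 0)"
    using z(1) by (simp add: l_ann_TM)
  then show "a = (\<lambda>_. 0)"
    using z(2,3) a unfolding central_in_def by metis
qed

lemma r_ann_eq_l_ann_TM:
  assumes semiprime: "semiprime_End sm" and I: "ring_ideal S I"
  shows "r_ann S I = l_ann sm (TM sm I)"
proof -
  have "(\<forall>g\<in>I. g \<circ> f = (\<lambda>_. 0)) \<longleftrightarrow> (\<forall>g\<in>I. f \<circ> g = (\<lambda>_. 0))" if f: "f \<in> S" for f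
  proof (intro iffI ballI)
    fix g assume If: "\<forall>g\<in>I. g \<circ> f = (\<lambda>_. 0)" and g: "g \<in> I"
    show "f \<circ> g = (\<lambda>_. 0)"
      using semiprime_comp_eq_zero[OF semiprime f, of g] ring_ideal_right[OF I g] If g
        ring_ideal_subset[OF I] by blast
  next
    fix g assume fI: "\<forall>g\<in>I. f \<circ> g = (\<lambda>_. 0)" and g: "g \<in> I"
    have "f \<circ> s \<circ> g = (\<lambda>_. 0)" if "s \<in> S" for s
      using fI ring_ideal_left[OF I g that] by (simp add: comp_assoc)
    then show "g \<circ> f = (\<lambda>_. 0)"
      using semiprime_comp_eq_zero[OF semiprime _ f, of g] g ring_ideal_subset[OF I] by blast
  qed
  then show ?thesis
    unfolding r_ann_def l_ann_TM by blast
qed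

end

section \<open>Orthogonal central families\<close>

definition orthogonal_central_family :: "('m \<Rightarrow> 'm) set \<Rightarrow> nat \<Rightarrow> (nat \<Rightarrow> 'm \<Rightarrow> 'm::zero) \<Rightarrow> bool"
  where "orthogonal_central_family S k u \<longleftrightarrow>
     (\<forall>i<k. central_in S (u i) \<and> u i \<noteq> (\<lambda>_. 0)) \<and>
     (\<forall>i<k. \<forall>j<k. i \<noteq> j \<longrightarrow> u i \<circ> u j = (\<lambda>_. 0))"

lemma orthogonal_central_family_extend:
  assumes u: "orthogonal_central_family S k u" and uz: "\<And>i. i < k \<Longrightarrow> u i \<circ> z = u i"
    and v: "central_in S v" "v \<noteq> (\<lambda>_. 0)"
    and v_orth: "\<And>x. x \<in> S \<Longrightarrow> x \<circ> z = x \<Longrightarrow> x \<circ> v = (\<lambda>_. 0)"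
  shows "orthogonal_central_family S (Suc k) (u(k := v))"
proof -
  have u_central: "\<forall>i<k. central_in S (u i) \<and> u i \<noteq> (\<lambda>_. 0)"
    and u_orth: "\<forall>i<k. \<forall>j<k. i \<noteq> j \<longrightarrow> u i \<circ> u j = (\<lambda>_. 0)"
    using u unfolding orthogonal_central_family_def by blast+
  have u_v: "u i \<circ> v = (\<lambda>_. 0)" and v_u: "v \<circ> u i = (\<lambda>_. 0)" if "i < k" for i
  proof -
    have ui: "central_in S (u i)"
      using that u_central by blast
    then show "u i \<circ> v = (\<lambda>_. 0)"
      using v_orth uz[OF that] central_in_End by blast
    then show "v \<circ> u i = (\<lambda>_. 0)"
      using ui central_in_End[OF v(1)] unfolding central_in_def by metis
  qed
  show ?thesis
    unfolding orthogonal_central_family_def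
    using u_central u_orth v u_v v_u by (auto simp: less_Suc_eq)
qed

context rmodule
begin

lemma centrally_s_unital_common_unit:
  assumes L: "ring_ideal S L" "centrally_s_unital S L" and a: "a \<in> L" and b: "b \<in> L"
  obtains z where "z \<in> L" "central_in S z" "a \<circ> z = a" "b \<circ> z = b"
proof -
  obtain w where w: "w \<in> L" "central_in S w" "a \<circ> w = a"
    using L(2) a unfolding centrally_s_unital_def by blast
  obtain v where v: "v \<in> L" "central_in S v" "b \<circ> v = b"
    using L(2) b unfolding centrally_s_unital_def by blast
  have aS: "a \<in> S" and bS: "b \<in> S" and wS: "w \<in> S" and vS: "v \<in> S"
    using a b w(1) v(1) ring_ideal_subset[OF L(1)] by blast+
  define z where "z = (\<lambda>x. w x + v x - w (v x))"
  have zL: "z \<in> L"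
    using ring_ideal_diff[OF L(1) ring_ideal_add[OF L(1) w(1) v(1)] ring_ideal_right[OF L(1) w(1) vS]]
    by (simp add: z_def)
  moreover have "central_in S z"
    unfolding central_in_def
  proof (intro conjI ballI ext)
    show "z \<in> S"
      using zL ring_ideal_subset[OF L(1)] by blast
    show "(f \<circ> z) x = (z \<circ> f) x" if f: "f \<in> S" for f x
      using central_commute[OF w(2) f] central_commute[OF v(2) f]
      by (simp add: z_def End_add[OF f] End_diff[OF f])
  qed
  moreover have "a \<circ> z = a"
  proof
    fix y
    have "a (w t) = a t" for t
      using w(3) by (metis comp_apply)
    then show "(a \<circ> z) y = a y"
      by (simp add: z_def End_add[OF aS] End_diff[OF aS])
  qed
  moreover have "b \<circ> z = b"
  proof
    fix y
    have "b (v t) = b t" for t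
      using v(3) by (metis comp_apply)
    moreover have "w (v y) = v (w y)"
      using central_commute[OF v(2) wS] by simp
    ultimately show "(b \<circ> z) y = b y"
      by (simp add: z_def End_add[OF bS] End_diff[OF bS])
  qed
  ultimately show ?thesis
    using that by blast
qed

lemma extend_orthogonal_central:
  assumes L: "ring_ideal S L" "centrally_s_unital S L"
    and z: "z \<in> L" "central_in S z" and a: "a \<in> L" "a \<circ> z \<noteq> a"
  obtains z' u where "z' \<in> L" "central_in S z'" "z \<circ> z' = z"
    "central_in S u" "u \<noteq> (\<lambda>_. 0)" "u \<circ> z' = u"
    "\<And>x. x \<in> S \<Longrightarrow> x \<circ> z = x \<Longrightarrow> x \<circ> u = (\<lambda>_. 0)"
proof -
  obtain z1 where z1: "z1 \<in> L" "central_in S z1" "z \<circ> z1 = z" "a \<circ> z1 = a"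
    using centrally_s_unital_common_unit[OF L z(1) a(1)] by blast
  obtain z2 where z2: "z2 \<in> L" "central_in S z2" "z1 \<circ> z2 = z1"
    using L(2) z1(1) unfolding centrally_s_unital_def by blast
  define u where "u = (\<lambda>x. z1 x - z x)"
  have z_z2: "z \<circ> z2 = z"
    using z1(3) z2(3) by (metis comp_assoc)
  show ?thesis
  proof
    show "z2 \<in> L" "central_in S z2" "z \<circ> z2 = z"
      using z2(1,2) z_z2 .
    show "central_in S u"
      unfolding u_def using central_diff[OF z1(2) z(2)] .
    show "u \<noteq> (\<lambda>_. 0)"
    proof
      assume "u = (\<lambda>_. 0)"
      then have "z1 = z"
        by (auto simp: u_def fun_eq_iff)
      then show False
        using a(2) z1(4) by simp
    qed
    show "u \<circ> z2 = u"
      using fun_cong[OF z2(3)] fun_cong[OF z_z2] by (simp add: u_def fun_eq_iff)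
    show "x \<circ> u = (\<lambda>_. 0)" if x: "x \<in> S" and xz: "x \<circ> z = x" for x
    proof
      fix y
      have "x (z t) = x t" for t
        using xz by (metis comp_apply)
      moreover have "z (z1 y) = z y"
        using z1(3) by (metis comp_apply)
      ultimately have "x (z1 y) = x (z y)"
        by metis
      then show "(x \<circ> u) y = 0"
        by (simp add: u_def End_diff[OF x])
    qed
  qed
qed

lemma orthogonal_central_family_if_no_right_unit:
  assumes L: "ring_ideal S L" "centrally_s_unital S L"
    and no_unit: "\<not> (\<exists>e\<in>L. \<forall>a\<in>L. a \<circ> e = a)"
  shows "\<exists>u. orthogonal_central_family S k u"
proof -
  have "\<exists>z u. z \<in> L \<and> central_in S z \<and> orthogonal_central_family S k u \<and> (\<forall>i<k. u i \<circ> z = u i)"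
  proof (induction k)
    case 0
    obtain z where "z \<in> L" "central_in S z"
      using L ring_ideal_zero[OF L(1)] unfolding centrally_s_unital_def by blast
    then show ?case
      unfolding orthogonal_central_family_def by blast
  next
    case (Suc k)
    then obtain z u where z: "z \<in> L" "central_in S z" and u: "orthogonal_central_family S k u"
      and uz: "\<forall>i<k. u i \<circ> z = u i"
      by blast
    obtain a where a: "a \<in> L" "a \<circ> z \<noteq> a"
      using no_unit z(1) by blast
    obtain z' v where z': "z' \<in> L" "central_in S z'" "z \<circ> z' = z"
      and v: "central_in S v" "v \<noteq> (\<lambda>_. 0)" "v \<circ> z' = v"
      and v_orth: "\<And>x. x \<in> S \<Longrightarrow> x \<circ> z = x \<Longrightarrow> x \<circ> v = (\<lambda>_. 0)"
      using extend_orthogonal_central[OF L z a] by blast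
    have "orthogonal_central_family S (Suc k) (u(k := v))"
      using orthogonal_central_family_extend[OF u _ v(1,2) v_orth] uz by blast
    moreover have "\<forall>i<Suc k. (u(k := v)) i \<circ> z' = (u(k := v)) i"
    proof -
      have "u i \<circ> z' = u i" if "i < k" for i
        using uz that z'(3) by (metis comp_assoc)
      then show ?thesis
        using v(3) by (auto simp: less_Suc_eq)
    qed
    ultimately show ?case
      using z'(1,2) by blast
  qed
  then show ?thesis
    by blast
qed

section \<open>Uniform dimension\<close>

lemma uniform_meets_cyclic:
  assumes U: "uniform sm U" and K: "submodule sm K" "K \<inter> U \<noteq> {0}" and y: "y \<in> U" "y \<noteq> 0"
  obtains r where "sm y r \<noteq> 0" "sm y r \<in> K"
proof -
  let ?C = "{sm y r | r. True}"
  have U_sub: "submodule sm U"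
    using U unfolding uniform_def by blast
  have "sm y 1 \<in> ?C"
    by blast
  then have "?C \<noteq> {0}"
    using y(2) by (auto simp: sm_one)
  moreover have "?C \<subseteq> U"
    using U_sub y(1) unfolding submodule_def by blast
  moreover have KU: "submodule sm (K \<inter> U)"
    using submodule_Int[OF K(1) U_sub] .
  ultimately have "?C \<inter> (K \<inter> U) \<noteq> {0}"
    using U submodule_cyclic[of y] K(2) unfolding uniform_def by (meson inf_le2)
  moreover have "0 \<in> ?C \<inter> (K \<inter> U)"
    using submodule_cyclic[of y] KU unfolding submodule_def by blast
  ultimately obtain w where "w \<in> ?C" "w \<in> K" "w \<noteq> 0"
    by blast
  then show ?thesis
    using that by blast
qed

lemma uniform_sm_closed: "uniform sm U \<Longrightarrow> x \<in> U \<Longrightarrow> sm x r \<in> U"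
  unfolding uniform_def submodule_def by blast

lemma scalar_into_submodule_at_summand:
  fixes n :: nat
  assumes U: "\<forall>i<n. uniform sm (U i)"
    and indep: "\<forall>x. (\<forall>i<n. x i \<in> U i) \<and> (\<Sum>i<n. x i) = 0 \<longrightarrow> (\<forall>i<n. x i = 0)"
    and K: "submodule sm K" "K \<inter> U j \<noteq> {0}" and j: "j < n"
    and c: "\<forall>i<n. c i \<in> U i" "(\<Sum>i<n. c i) \<noteq> 0"
  shows "\<exists>r. (\<Sum>i<n. sm (c i) r) \<noteq> 0 \<and> sm (c j) r \<in> K"
proof (cases "c j = 0")
  case True
  then show ?thesis
    using c(2) K(1) by (intro exI[of _ 1]) (simp add: sm_one submodule_def)
next
  case False
  then obtain r where r: "sm (c j) r \<noteq> 0" "sm (c j) r \<in> K"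
    using uniform_meets_cyclic[OF _ K] U c(1) j by blast
  moreover have "(\<Sum>i<n. sm (c i) r) \<noteq> 0"
  proof
    assume "(\<Sum>i<n. sm (c i) r) = 0"
    then have "sm (c j) r = 0"
      using indep[rule_format, of "\<lambda>i. sm (c i) r"] U c(1) j uniform_sm_closed by blast
    then show False
      using r(1) by simp
  qed
  ultimately show ?thesis
    by blast
qed

lemma scalar_into_submodule_meeting_summands:
  fixes n :: nat
  assumes U: "\<forall>i<n. uniform sm (U i)"
    and indep: "\<forall>x. (\<forall>i<n. x i \<in> U i) \<and> (\<Sum>i<n. x i) = 0 \<longrightarrow> (\<forall>i<n. x i = 0)"
    and K: "submodule sm K" "\<And>i. i < n \<Longrightarrow> K \<inter> U i \<noteq> {0}"
    and c: "\<forall>i<n. c i \<in> U i" "(\<Sum>i<n. c i) \<noteq> 0"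
  shows "\<exists>r. (\<Sum>i<n. sm (c i) r) \<noteq> 0 \<and> (\<forall>i<n. sm (c i) r \<in> K)"
proof -
  have "j \<le> n \<Longrightarrow> \<exists>r. (\<Sum>i<n. sm (c i) r) \<noteq> 0 \<and> (\<forall>i<j. sm (c i) r \<in> K)" for j
  proof (induction j)
    case 0
    show ?case
      using c(2) by (intro exI[of _ 1]) (simp add: sm_one)
  next
    case (Suc j)
    then obtain r where r: "(\<Sum>i<n. sm (c i) r) \<noteq> 0" "\<forall>i<j. sm (c i) r \<in> K"
      by auto
    have j: "j < n"
      using Suc.prems by simp
    have "\<forall>i<n. sm (c i) r \<in> U i"
      using U c(1) uniform_sm_closed by blast
    then obtain r' where r': "(\<Sum>i<n. sm (sm (c i) r) r') \<noteq> 0" "sm (sm (c j) r) r' \<in> K"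
      using scalar_into_submodule_at_summand[OF U indep K(1) K(2)[OF j] j _ r(1)] by blast
    have "\<forall>i<Suc j. sm (c i) (r * r') \<in> K"
      using r(2) r'(2) K(1) unfolding submodule_def by (auto simp: less_Suc_eq simp flip: sm_mult)
    then show ?case
      using r'(1) by (auto simp: sm_mult)
  qed
  then show ?thesis
    by blast
qed

lemma essential_if_meets_uniform_summands:
  fixes n :: nat
  assumes E: "essential sm E UNIV" "E = {\<Sum>i<n. x i | x. \<forall>i<n. x i \<in> U i}"
    and U: "\<forall>i<n. uniform sm (U i)"
    and indep: "\<forall>x. (\<forall>i<n. x i \<in> U i) \<and> (\<Sum>i<n. x i) = 0 \<longrightarrow> (\<forall>i<n. x i = 0)"
    and K: "submodule sm K" "\<And>i. i < n \<Longrightarrow> K \<inter> U i \<noteq> {0}"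
    and X: "submodule sm X" "X \<noteq> {0}"
  shows "X \<inter> K \<noteq> {0}"
proof -
  have "X \<inter> E \<noteq> {0}" "0 \<in> X" "0 \<in> E"
    using E(1) X unfolding essential_def submodule_def by blast+
  then obtain x where "x \<in> X" "x \<in> E" "x \<noteq> 0"
    by blast
  then obtain c where x: "(\<Sum>i<n. c i) \<in> X" "(\<Sum>i<n. c i) \<noteq> 0" and c: "\<forall>i<n. c i \<in> U i"
    using E(2) by blast
  obtain r where r: "(\<Sum>i<n. sm (c i) r) \<noteq> 0" "\<forall>i<n. sm (c i) r \<in> K"
    using scalar_into_submodule_meeting_summands[OF U indep K c x(2)] by blast
  have "sm (\<Sum>i<n. c i) r \<in> X"
    using x(1) X(1) unfolding submodule_def by blast
  then have "(\<Sum>i<n. sm (c i) r) \<in> X"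
    by (simp add: sm_sum)
  moreover have "(\<Sum>i<n. sm (c i) r) \<in> K"
    using r(2) by (intro submodule_sum[OF K(1)]) simp
  ultimately show ?thesis
    using r(1) by blast
qed

lemma central_range_inter_kernel:
  assumes semiprime: "semiprime_End sm" and retractable: "retractable sm"
    and u: "central_in S u"
  shows "range u \<inter> {x. u x = 0} = {0}"
proof (rule ccontr)
  have uS: "u \<in> S"
    using u by (rule central_in_End)
  let ?N = "range u \<inter> {x. u x = 0}"
  assume "?N \<noteq> {0}"
  moreover have "submodule sm ?N"
    using submodule_Int[OF submodule_range submodule_kernel] uS by blast
  ultimately obtain f where f: "f \<in> S" "range f \<subseteq> ?N" "f \<noteq> (\<lambda>_. 0)"
    using retractable unfolding retractable_def Hom_into_def by blast
  have "f \<circ> t \<circ> f = (\<lambda>_. 0)" if t: "t \<in> S" for t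
  proof
    fix x
    obtain y where "f x = u y"
      using f(2) by blast
    then have "f (t (f x)) = u (f (t y))"
      using central_commute[OF u t] central_commute[OF u f(1)] by simp
    also have "\<dots> = 0"
      using f(2) by blast
    finally show "(f \<circ> t \<circ> f) x = 0"
      by simp
  qed
  then show False
    using semiprime f(1,3) unfolding semiprime_End_def by blast
qed

lemma central_kernel_trivial_on_some_summand:
  fixes n :: nat
  assumes semiprime: "semiprime_End sm" and retractable: "retractable sm"
    and E: "essential sm E UNIV" "E = {\<Sum>i<n. x i | x. \<forall>i<n. x i \<in> U i}"
    and U: "\<forall>i<n. uniform sm (U i)"
    and indep: "\<forall>x. (\<forall>i<n. x i \<in> U i) \<and> (\<Sum>i<n. x i) = 0 \<longrightarrow> (\<forall>i<n. x i = 0)"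
    and u: "central_in S u" "u \<noteq> (\<lambda>_. 0)"
  shows "\<exists>l<n. {x. u x = 0} \<inter> U l = {0}"
proof (rule ccontr)
  have uS: "u \<in> S"
    using u(1) by (rule central_in_End)
  assume "\<not> (\<exists>l<n. {x. u x = 0} \<inter> U l = {0})"
  moreover have "range u \<noteq> {0}"
    using u(2) by (auto simp: fun_eq_iff)
  ultimately have "range u \<inter> {x. u x = 0} \<noteq> {0}"
    using essential_if_meets_uniform_summands[OF E U indep submodule_kernel[OF uS] _
        submodule_range[OF uS]] by blast
  then show False
    using central_range_inter_kernel[OF semiprime retractable u(1)] by blast
qed

lemma orthogonal_central_kernels_meet:
  assumes retractable: "retractable sm" and U: "submodule sm U" "U \<noteq> {0}"
    and u: "central_in S u" "{x. u x = 0} \<inter> U = {0}" and vu: "v \<circ> u = (\<lambda>_. 0)"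
  shows "{x. v x = 0} \<inter> U \<noteq> {0}"
proof -
  obtain g where g: "g \<in> S" "range g \<subseteq> U" "g \<noteq> (\<lambda>_. 0)"
    using retractable U unfolding retractable_def Hom_into_def by blast
  obtain x where "g x \<noteq> 0"
    using g(3) by (auto simp: fun_eq_iff)
  then have "u (g x) \<noteq> 0"
    using u(2) g(2) by blast
  moreover have "u (g x) \<in> U"
    using central_commute[OF u(1) g(1)] g(2) by (metis rangeI subsetD)
  moreover have "v (u (g x)) = 0"
    using vu by (metis comp_apply)
  ultimately show ?thesis
    by blast
qed

lemma orthogonal_central_family_le:
  fixes n :: nat
  assumes semiprime: "semiprime_End sm" and retractable: "retractable sm"
    and E: "essential sm E UNIV" "E = {\<Sum>i<n. x i | x. \<forall>i<n. x i \<in> U i}"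
    and U: "\<forall>i<n. uniform sm (U i)"
    and indep: "\<forall>x. (\<forall>i<n. x i \<in> U i) \<and> (\<Sum>i<n. x i) = 0 \<longrightarrow> (\<forall>i<n. x i = 0)"
    and u: "orthogonal_central_family S k u"
  shows "k \<le> n"
proof -
  have u_central: "central_in S (u i)" "u i \<noteq> (\<lambda>_. 0)" if "i < k" for i
    using u that unfolding orthogonal_central_family_def by blast+
  have u_orth: "u j \<circ> u i = (\<lambda>_. 0)" if "i < k" "j < k" "i \<noteq> j" for i j
    using u that unfolding orthogonal_central_family_def by blast
  have "\<forall>i\<in>{..<k}. \<exists>l. l < n \<and> {x. u i x = 0} \<inter> U l = {0}"
    using central_kernel_trivial_on_some_summand[OF semiprime retractable E U indep] u_central
    by blast
  from bchoice[OF this] obtain \<phi>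
    where \<phi>: "\<And>i. i < k \<Longrightarrow> \<phi> i < n \<and> {x. u i x = 0} \<inter> U (\<phi> i) = {0}"
    by blast
  have "inj_on \<phi> {..<k}"
  proof (rule inj_onI, rule ccontr)
    fix i j assume ij: "i \<in> {..<k}" "j \<in> {..<k}" "\<phi> i = \<phi> j" "i \<noteq> j"
    then have i: "i < k" and j: "j < k"
      by simp_all
    have "submodule sm (U (\<phi> i))" "U (\<phi> i) \<noteq> {0}"
      using U \<phi>[OF i] unfolding uniform_def by auto
    then have "{x. u j x = 0} \<inter> U (\<phi> i) \<noteq> {0}"
      using orthogonal_central_kernels_meet[OF retractable _ _ u_central(1)[OF i]]
        \<phi>[OF i] u_orth[OF i j ij(4)] by blast
    then show False
      using \<phi> ij by simp
  qed
  moreover have "\<phi> ` {..<k} \<subseteq> {..<n}"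
    using \<phi> by auto
  ultimately show "k \<le> n"
    using card_inj_on_le[of \<phi> "{..<k}" "{..<n}"] by simp
qed

lemma centrally_s_unital_has_right_unit:
  assumes semiprime: "semiprime_End sm" and retractable: "retractable sm"
    and "finite_uniform_dimension sm"
    and L: "ring_ideal S L" "centrally_s_unital S L"
  shows "\<exists>e\<in>L. \<forall>a\<in>L. a \<circ> e = a"
proof (rule ccontr)
  obtain E and n :: nat and U where E: "essential sm E UNIV" "E = {\<Sum>i<n. x i | x. \<forall>i<n. x i \<in> U i}"
    and U: "\<forall>i<n. uniform sm (U i)"
    and indep: "\<forall>x. (\<forall>i<n. x i \<in> U i) \<and> (\<Sum>i<n. x i) = 0 \<longrightarrow> (\<forall>i<n. x i = 0)"
    using assms(3) unfolding finite_uniform_dimension_def finite_direct_sum_of_uniform_def by blast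
  assume "\<not> (\<exists>e\<in>L. \<forall>a\<in>L. a \<circ> e = a)"
  then obtain u where "orthogonal_central_family S (Suc n) u"
    using orthogonal_central_family_if_no_right_unit[OF L] by blast
  then show False
    using orthogonal_central_family_le[OF semiprime retractable E U indep] by fastforce
qed

end

theorem corollary3p7:
  fixes sm :: "'m::ab_group_add \<Rightarrow> 'r::ring_1 \<Rightarrow> 'm"
  assumes "right_module sm"
    and "centrally_endo_AIP sm"
    and "semi_projective sm"
    and "retractable sm"
    and "finite_uniform_dimension sm"
  shows "quasi_Baer_End sm"
  unfolding quasi_Baer_End_def
proof (intro allI impI)
  interpret rmodule sm
    using assms(1) by unfold_locales
  have semiprime: "semiprime_End sm"
    using semiprime_if_centrally_endo_AIP[OF assms(2)] .
  fix I assume I: "ring_ideal S I"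
  let ?L = "l_ann sm (TM sm I)"
  have "fully_invariant sm (TM sm I)"
    using fully_invariant_TM ring_ideal_left[OF I] by blast
  then have L: "ring_ideal S ?L" "centrally_s_unital S ?L"
    using assms(2) unfolding centrally_endo_AIP_def by blast+
  then obtain e where e: "e \<in> ?L" "\<forall>a\<in>?L. a \<circ> e = a"
    using centrally_s_unital_has_right_unit[OF semiprime assms(4,5)] by blast
  then have "e \<in> S" "e \<circ> e = e" "?L = {e \<circ> s | s. s \<in> S}"
    using centrally_s_unital_right_unit[OF L] ring_ideal_subset[OF L(1)] by blast+
  then show "\<exists>e\<in>S. e \<circ> e = e \<and> r_ann S I = {e \<circ> s | s. s \<in> S}"
    using r_ann_eq_l_ann_TM[OF semiprime I] by auto
qed

end
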